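(* Let $\theta_1,\theta_2>0$ and consider on $[0,1]^3$ the system $\dot x = x(1-x)(0.5ry-0.5y+0.5)$, $\dot y = y(1-y)(0.5rx-0.5x-0.5r)$, $\dot r = r(1-r)[(1+\theta_1)x+(1+\theta_2)y-2]$. For every initial condition $(x_0,y_0,r_0)\in(0,1)^3$, the solution satisfies $x(t)\to1$ and $y(t)\to0$ as $t\to\infty$; moreover $r(t)\to1$ if $\theta_1>1$, $r(t)\to0$ if $\theta_1<1$, and if $\theta_1=1$ the solution converges to a point of the segment $\{(1,0,r):r\in[0,1]\}$.
   Context: This is the two-population replicator system with environmental feedback for the payoff matrices $A(r)=\begin{bmatrix}0.5r&1\\0&0.5\end{bmatrix}$ (population 1) and $B(r)=\begin{bmatrix}0.5&0\\1&0.5r\end{bmatrix}$ (population 2); $x,y$ are the fractions of strategy 1 in populations 1 and 2 and $r\in[0,1]$ is the environmental state. *)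

theory Defs
  imports Complex_Main
begin

definition fx :: "real \<Rightarrow> real \<Rightarrow> real \<Rightarrow> real" where
  "fx x y r = x * (1 - x) * (0.5 * r * y - 0.5 * y + 0.5)"

definition fy :: "real \<Rightarrow> real \<Rightarrow> real \<Rightarrow> real" where
  "fy x y r = y * (1 - y) * (0.5 * r * x - 0.5 * x - 0.5 * r)"

definition fr :: "real \<Rightarrow> real \<Rightarrow> real \<Rightarrow> real \<Rightarrow> real \<Rightarrow> real" where
  "fr \<theta>1 \<theta>2 x y r = r * (1 - r) * ((1 + \<theta>1) * x + (1 + \<theta>2) * y - 2)"

definition is_solution ::
  "real \<Rightarrow> real \<Rightarrow> (real \<Rightarrow> real) \<Rightarrow> (real \<Rightarrow> real) \<Rightarrow> (real \<Rightarrow> real) \<Rightarrow> bool" where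
  "is_solution \<theta>1 \<theta>2 x y r \<longleftrightarrow>
     (\<forall>t\<ge>0. (x has_real_derivative fx (x t) (y t) (r t)) (at t within {0..}) \<and>
             (y has_real_derivative fy (x t) (y t) (r t)) (at t within {0..}) \<and>
             (r has_real_derivative fr \<theta>1 \<theta>2 (x t) (y t) (r t)) (at t within {0..}))"

end

theory Submission
  imports Defs "HOL-Analysis.Analysis"
begin

text \<open>Each equation has the logistic form \<open>g' = g (1 - g) k\<close>, for \<open>g = x\<close>, \<open>1 - y\<close> and \<open>r\<close>,
  with gains \<open>k\<close> bounded on the unit cube; hence no coordinate can leave \<open>(0, 1)\<close>. Inside the
  cube \<open>x\<close> increases and \<open>y\<close> decreases, which keeps their gains bounded away from zero, so
  \<open>x \<rightarrow> 1\<close> and \<open>y \<rightarrow> 0\<close>. The gain of \<open>r\<close> then tends to \<open>\<theta>1 - 1\<close>, which drives \<open>r\<close> to \<open>1\<close> or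
  \<open>0\<close> unless \<open>\<theta>1 = 1\<close>; in that borderline case the logit of \<open>r\<close> is squeezed between two
  monotone envelopes and converges.\<close>

lemma continuous_on_if_deriv_within:
  fixes g g' :: "real \<Rightarrow> real"
  assumes "\<And>t. 0 \<le> t \<Longrightarrow> (g has_real_derivative g' t) (at t within {0..})"
  shows "continuous_on {0..} g"
proof -
  have "continuous (at t within {0..}) g" if "t \<in> {0..}" for t
    using DERIV_continuous[OF assms[of t]] that by simp
  then show ?thesis unfolding continuous_on_eq_continuous_within by blast
qed

lemma le_if_deriv_within_nonneg:
  fixes g g' :: "real \<Rightarrow> real"
  assumes deriv: "\<And>t. 0 \<le> t \<Longrightarrow> (g has_real_derivative g' t) (at t within {0..})"
    and "0 \<le> a" "a \<le> b" and nonneg: "\<And>t. a < t \<Longrightarrow> t < b \<Longrightarrow> 0 \<le> g' t"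
  shows "g a \<le> g b"
proof (rule DERIV_nonneg_imp_increasing_open[OF \<open>a \<le> b\<close>])
  fix t assume "a < t" "t < b"
  with \<open>0 \<le> a\<close> have "(g has_real_derivative g' t) (at t within {0<..})"
    by (intro has_field_derivative_subset[OF deriv]) auto
  moreover have "at t within {0<..} = at t"
    using \<open>a < t\<close> \<open>0 \<le> a\<close> by (intro at_within_open) auto
  ultimately show "\<exists>D. (g has_real_derivative D) (at t) \<and> 0 \<le> D"
    using nonneg[of t] \<open>a < t\<close> \<open>t < b\<close> by auto
next
  have "continuous_on {0..} g"
    using deriv by (rule continuous_on_if_deriv_within)
  then show "continuous_on {a..b} g"
    by (rule continuous_on_subset) (use \<open>0 \<le> a\<close> in auto)
qed

lemma linear_growth_if_deriv_within_ge:
  fixes g g' :: "real \<Rightarrow> real"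
  assumes deriv: "\<And>t. 0 \<le> t \<Longrightarrow> (g has_real_derivative g' t) (at t within {0..})"
    and "0 \<le> u" "u \<le> t" and ge: "\<And>s. u < s \<Longrightarrow> s < t \<Longrightarrow> \<delta> \<le> g' s"
  shows "g u + \<delta> * (t - u) \<le> g t"
proof -
  have "g u - \<delta> * u \<le> g t - \<delta> * t"
    by (rule le_if_deriv_within_nonneg[where g' = "\<lambda>s. g' s - \<delta>", OF _ \<open>0 \<le> u\<close> \<open>u \<le> t\<close>])
      (use deriv ge in \<open>auto intro!: derivative_eq_intros\<close>)
  then show ?thesis by (simp add: algebra_simps)
qed

text \<open>The hypothesis makes \<open>g t * exp (c t)\<close> nondecreasing.\<close>
lemma pos_if_deriv_within_ge_neg_mult:
  fixes g g' :: "real \<Rightarrow> real"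
  assumes deriv: "\<And>t. 0 \<le> t \<Longrightarrow> (g has_real_derivative g' t) (at t within {0..})"
    and "0 \<le> T" "0 < g 0" and ge: "\<And>t. 0 < t \<Longrightarrow> t < T \<Longrightarrow> - c * g t \<le> g' t"
  shows "0 < g T"
proof -
  have "g 0 * exp (c * 0) \<le> g T * exp (c * T)"
  proof (rule le_if_deriv_within_nonneg[OF _ order_refl \<open>0 \<le> T\<close>])
    fix t :: real assume "0 \<le> t"
    show "((\<lambda>t. g t * exp (c * t)) has_real_derivative exp (c * t) * (g' t + c * g t))
        (at t within {0..})"
      using deriv[OF \<open>0 \<le> t\<close>] by (auto intro!: derivative_eq_intros simp: algebra_simps)
  next
    fix t :: real assume "0 < t" "t < T"
    then show "0 \<le> exp (c * t) * (g' t + c * g t)" using ge[of t] by simp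
  qed
  with \<open>0 < g 0\<close> have "0 < g T * exp (c * T)" by simp
  then show ?thesis by (simp add: zero_less_mult_iff)
qed

lemma stays_in_open_if_no_first_exit:
  fixes f :: "real \<Rightarrow> 'a::topological_space"
  assumes "continuous_on {0..} f" "open S"
    and no_exit: "\<And>T. 0 \<le> T \<Longrightarrow> (\<And>s. 0 \<le> s \<Longrightarrow> s < T \<Longrightarrow> f s \<in> S) \<Longrightarrow> f T \<in> S"
    and "0 \<le> t"
  shows "f t \<in> S"
proof (rule ccontr)
  assume "f t \<notin> S"
  define B where "B = {0..} \<inter> f -` (- S)"
  have "B \<noteq> {}" using \<open>0 \<le> t\<close> \<open>f t \<notin> S\<close> by (auto simp: B_def)
  moreover have "bdd_below B" by (auto simp: B_def intro: bdd_belowI[of _ 0])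
  moreover have "closed B"
    unfolding B_def using assms(1,2) by (intro continuous_closed_preimage) auto
  ultimately have "Inf B \<in> B" by (rule closed_contains_Inf)
  moreover have "f s \<in> S" if "0 \<le> s" "s < Inf B" for s
    using cInf_lower[OF _ \<open>bdd_below B\<close>, of s] that by (force simp: B_def)
  ultimately show False using no_exit[of "Inf B"] by (auto simp: B_def)
qed

lemma logistic_rate_bounds:
  fixes g k K :: real
  assumes "0 \<le> g" "g \<le> 1" "\<bar>k\<bar> \<le> K"
  shows "- K * g \<le> g * (1 - g) * k" and "- K * (1 - g) \<le> - (g * (1 - g) * k)"
proof -
  have "\<bar>g * (1 - g) * k\<bar> = g * (1 - g) * \<bar>k\<bar>" using assms by (simp add: abs_mult)
  also have "\<dots> \<le> g * (1 - g) * K" using assms by (intro mult_left_mono) auto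
  finally have bound: "\<bar>g * (1 - g) * k\<bar> \<le> g * (1 - g) * K" .
  have "0 \<le> K" using assms(3) by linarith
  then have "g * (1 - g) * K \<le> g * K" "g * (1 - g) * K \<le> (1 - g) * K"
    using assms by (auto intro!: mult_right_mono simp: mult_left_le mult_left_le_one_le)
  with bound show "- K * g \<le> g * (1 - g) * k" "- K * (1 - g) \<le> - (g * (1 - g) * k)"
    by (auto simp: abs_le_iff algebra_simps)
qed

lemma logistic_stays_in_unit_interval:
  fixes g k :: "real \<Rightarrow> real"
  assumes deriv: "\<And>t. 0 \<le> t \<Longrightarrow> (g has_real_derivative g t * (1 - g t) * k t) (at t within {0..})"
    and "0 \<le> T" and initial: "g 0 \<in> {0<..<1}"
    and bounded: "\<And>t. 0 < t \<Longrightarrow> t < T \<Longrightarrow> g t \<in> {0<..<1} \<and> \<bar>k t\<bar> \<le> K"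
  shows "g T \<in> {0<..<1}"
proof -
  have "0 < g T"
  proof (rule pos_if_deriv_within_ge_neg_mult[where c = K, OF deriv \<open>0 \<le> T\<close>])
    fix t :: real assume "0 < t" "t < T"
    then show "- K * g t \<le> g t * (1 - g t) * k t"
      using bounded[of t] by (intro logistic_rate_bounds) auto
  qed (use initial in auto)
  moreover have "0 < 1 - g T"
  proof (rule pos_if_deriv_within_ge_neg_mult[where c = K, OF _ \<open>0 \<le> T\<close>])
    fix t :: real assume "0 \<le> t"
    show "((\<lambda>t. 1 - g t) has_real_derivative - (g t * (1 - g t) * k t)) (at t within {0..})"
      using deriv[OF \<open>0 \<le> t\<close>] by (auto intro!: derivative_eq_intros)
  next
    fix t :: real assume "0 < t" "t < T"
    then show "- K * (1 - g t) \<le> - (g t * (1 - g t) * k t)"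
      using bounded[of t] by (intro logistic_rate_bounds) auto
  qed (use initial in auto)
  ultimately show ?thesis by simp
qed

text \<open>A logistic variable whose rate is eventually bounded away from zero is eventually
  nondecreasing; while it stays below \<open>a < 1\<close> it grows at least linearly, which its bound
  \<open>g < 1\<close> forbids.\<close>
lemma logistic_tendsto_one:
  fixes g k :: "real \<Rightarrow> real"
  assumes deriv: "\<And>t. 0 \<le> t \<Longrightarrow> (g has_real_derivative g t * (1 - g t) * k t) (at t within {0..})"
    and unit: "\<And>t. 0 \<le> t \<Longrightarrow> g t \<in> {0<..<1}"
    and rate: "\<forall>\<^sub>F t in at_top. \<eta> \<le> k t" and "0 < \<eta>"
  shows "(g \<longlongrightarrow> 1) at_top"
proof -
  obtain t0 where "0 \<le> t0" and k_ge: "\<And>t. t0 \<le> t \<Longrightarrow> \<eta> \<le> k t"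
    using rate unfolding eventually_at_top_linorder by (metis max.cobounded1 max.cobounded2 order_trans)
  have deriv_nonneg: "0 \<le> g t * (1 - g t) * k t" if "t0 \<le> t" for t
    using unit[of t] k_ge[OF that] \<open>0 < \<eta>\<close> \<open>0 \<le> t0\<close> that by simp
  have mono: "g s \<le> g t" if "t0 \<le> s" "s \<le> t" for s t
    using le_if_deriv_within_nonneg[OF deriv _ that(2)] deriv_nonneg that \<open>0 \<le> t0\<close> by simp
  have exceeds: "\<exists>t\<ge>t0. a < g t" if "a < 1" for a
  proof (rule ccontr)
    assume "\<not> (\<exists>t\<ge>t0. a < g t)"
    then have below: "g t \<le> a" if "t0 \<le> t" for t using that by (auto simp: not_less)
    define \<delta> where "\<delta> = g t0 * (1 - a) * \<eta>"
    have "0 < \<delta>" using unit[OF \<open>0 \<le> t0\<close>] \<open>a < 1\<close> \<open>0 < \<eta>\<close> by (simp add: \<delta>_def)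
    have "\<delta> \<le> g s * (1 - g s) * k s" if "t0 < s" for s
      unfolding \<delta>_def
      using that mono[of t0 s] below[of s] k_ge[of s] unit[OF \<open>0 \<le> t0\<close>] \<open>a < 1\<close> \<open>0 < \<eta>\<close>
      by (intro mult_mono) auto
    then have "g t0 + \<delta> * (t0 + 1 / \<delta> - t0) \<le> g (t0 + 1 / \<delta>)"
      using \<open>0 < \<delta>\<close> \<open>0 \<le> t0\<close> by (intro linear_growth_if_deriv_within_ge[OF deriv]) auto
    moreover have "g (t0 + 1 / \<delta>) < 1" using unit[of "t0 + 1 / \<delta>"] \<open>0 < \<delta>\<close> \<open>0 \<le> t0\<close> by simp
    ultimately show False using unit[OF \<open>0 \<le> t0\<close>] \<open>0 < \<delta>\<close> by simp
  qed
  show ?thesis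
  proof (rule order_tendstoI)
    fix a :: real assume "a < 1"
    with exceeds obtain s where "t0 \<le> s" "a < g s" by blast
    then show "\<forall>\<^sub>F t in at_top. a < g t"
      unfolding eventually_at_top_linorder by (metis less_le_trans mono order_trans)
  next
    fix a :: real assume "1 < a"
    then show "\<forall>\<^sub>F t in at_top. g t < a"
      unfolding eventually_at_top_linorder using unit by (metis greaterThanLessThan_iff less_trans)
  qed
qed

lemma logit_has_real_derivative:
  fixes g :: "real \<Rightarrow> real"
  assumes "(g has_real_derivative g t * (1 - g t) * k) (at t within S)" "g t \<in> {0<..<1}"
  shows "((\<lambda>t. ln (g t) - ln (1 - g t)) has_real_derivative k) (at t within S)"
  using assms by (auto intro!: derivative_eq_intros simp: field_simps)

lemma tendsto_logistic_if_logit_tendsto: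
  fixes g :: "real \<Rightarrow> real"
  assumes unit: "\<forall>\<^sub>F t in at_top. g t \<in> {0<..<1}"
    and logit: "((\<lambda>t. ln (g t) - ln (1 - g t)) \<longlongrightarrow> L) at_top"
  shows "(g \<longlongrightarrow> exp L / (1 + exp L)) at_top"
proof (rule Lim_transform_eventually)
  have "1 + exp L \<noteq> 0" using exp_gt_zero[of L] by linarith
  then show "((\<lambda>t. exp (ln (g t) - ln (1 - g t)) / (1 + exp (ln (g t) - ln (1 - g t))))
      \<longlongrightarrow> exp L / (1 + exp L)) at_top"
    by (intro tendsto_intros logit)
  have "exp (ln (g t) - ln (1 - g t)) / (1 + exp (ln (g t) - ln (1 - g t))) = g t"
    if "g t \<in> {0<..<1}" for t
  proof -
    have "exp (ln (g t) - ln (1 - g t)) = g t / (1 - g t)" using that by (simp add: exp_diff)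
    moreover have "1 + g t / (1 - g t) = 1 / (1 - g t)" using that by (simp add: field_simps)
    ultimately show ?thesis using that by simp
  qed
  then show "\<forall>\<^sub>F t in at_top.
      exp (ln (g t) - ln (1 - g t)) / (1 + exp (ln (g t) - ln (1 - g t))) = g t"
    using unit by (auto elim: eventually_mono)
qed

text \<open>\<open>\<phi> - b\<close> increases and is bounded by the decreasing \<open>\<phi> + a\<close>, so it converges; since
  \<open>b \<rightarrow> 0\<close>, so does \<open>\<phi>\<close>.\<close>
lemma convergent_if_monotone_corrections:
  fixes \<phi> a b :: "real \<Rightarrow> real"
  assumes lower: "\<And>s t. T \<le> s \<Longrightarrow> s \<le> t \<Longrightarrow> \<phi> s - b s \<le> \<phi> t - b t"
    and upper: "\<And>s t. T \<le> s \<Longrightarrow> s \<le> t \<Longrightarrow> \<phi> t + a t \<le> \<phi> s + a s"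
    and nonneg: "\<And>t. T \<le> t \<Longrightarrow> 0 \<le> a t + b t"
    and "(b \<longlongrightarrow> 0) at_top"
  shows "\<exists>L. (\<phi> \<longlongrightarrow> L) at_top"
proof -
  define V where "V t = \<phi> t - b t" for t
  have "V t \<le> \<phi> T + a T" if "T \<le> t" for t
    using upper[OF order_refl that] nonneg[OF that] by (simp add: V_def)
  then have bdd: "bdd_above (V ` {T..})" by (intro bdd_aboveI2[where M = "\<phi> T + a T"]) auto
  define L where "L = (SUP t\<in>{T..}. V t)"
  have "(V \<longlongrightarrow> L) at_top"
  proof (rule increasing_tendsto)
    show "\<forall>\<^sub>F t in at_top. V t \<le> L"
      unfolding eventually_at_top_linorder L_def by (auto intro!: exI[of _ T] cSUP_upper bdd)
  next
    fix c assume "c < L"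
    then obtain s where "T \<le> s" "c < V s" unfolding L_def using less_cSUP_iff[OF _ bdd] by auto
    then show "\<forall>\<^sub>F t in at_top. c < V t"
      unfolding eventually_at_top_linorder V_def using lower by (metis less_le_trans)
  qed
  then have "((\<lambda>t. V t + b t) \<longlongrightarrow> L + 0) at_top" by (intro tendsto_add \<open>(b \<longlongrightarrow> 0) at_top\<close>)
  then show ?thesis by (auto simp: V_def)
qed

lemma replicator_gains_bounded:
  fixes x y r \<theta>1 \<theta>2 :: real
  assumes "0 \<le> x" "x \<le> 1" "0 \<le> y" "y \<le> 1" "0 \<le> r" "r \<le> 1"
  shows "\<bar>0.5 * r * y - 0.5 * y + 0.5\<bar> \<le> 1"
    and "\<bar>(x * (1 - r) + r) / 2\<bar> \<le> 1"
    and "\<bar>(1 + \<theta>1) * x + (1 + \<theta>2) * y - 2\<bar> \<le> 4 + \<bar>\<theta>1\<bar> + \<bar>\<theta>2\<bar>"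
proof -
  have "0 \<le> x * (1 - r)" "x * (1 - r) \<le> 1" using assms by (auto intro: mult_le_one)
  with assms have "0 \<le> x * (1 - r) + r" "x * (1 - r) + r \<le> 2" by auto
  moreover have "0 \<le> y * (1 - r)" "y * (1 - r) \<le> 1" using assms by (auto intro: mult_le_one)
  moreover have "0.5 * r * y - 0.5 * y + 0.5 = (1 - y * (1 - r)) / 2" by (simp add: algebra_simps)
  ultimately show "\<bar>0.5 * r * y - 0.5 * y + 0.5\<bar> \<le> 1" and "\<bar>(x * (1 - r) + r) / 2\<bar> \<le> 1"
    by (simp_all add: abs_le_iff)
  have "\<bar>(1 + \<theta>1) * x\<bar> \<le> \<bar>1 + \<theta>1\<bar>" "\<bar>(1 + \<theta>2) * y\<bar> \<le> \<bar>1 + \<theta>2\<bar>"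
    using assms by (auto simp: abs_mult intro: mult_left_le)
  then show "\<bar>(1 + \<theta>1) * x + (1 + \<theta>2) * y - 2\<bar> \<le> 4 + \<bar>\<theta>1\<bar> + \<bar>\<theta>2\<bar>"
    by (smt (verit))
qed

lemma replicator_gains_lower_bounds:
  fixes x y r :: real
  assumes "0 \<le> x" "x \<le> 1" "0 \<le> y" "0 \<le> r"
  shows "(1 - y) / 2 \<le> 0.5 * r * y - 0.5 * y + 0.5" and "x / 2 \<le> (x * (1 - r) + r) / 2"
proof -
  have "0 \<le> r * y" "0 \<le> r * (1 - x)" using assms by auto
  moreover have "x * (1 - r) + r = x + r * (1 - x)" by (simp add: algebra_simps)
  ultimately show "(1 - y) / 2 \<le> 0.5 * r * y - 0.5 * y + 0.5" and "x / 2 \<le> (x * (1 - r) + r) / 2"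
    by simp_all
qed

lemma logistic_rate_lower_bound:
  fixes g k :: real
  assumes "1/2 \<le> g" "g \<le> 1" "1/4 \<le> k"
  shows "1 - g \<le> 8 * (g * (1 - g) * k)"
proof -
  have "(1/2) * (1/4) \<le> g * k" using assms by (intro mult_mono) auto
  then have "(1 - g) * 1 \<le> (1 - g) * (8 * (g * k))" using assms by (intro mult_left_mono) auto
  also have "\<dots> = 8 * (g * (1 - g) * k)" by (simp add: algebra_simps)
  finally show ?thesis by simp
qed

locale replicator_solution =
  fixes \<theta>1 \<theta>2 :: real and x y r :: "real \<Rightarrow> real"
  assumes solution: "is_solution \<theta>1 \<theta>2 x y r"
    and initial: "x 0 \<in> {0<..<1}" "y 0 \<in> {0<..<1}" "r 0 \<in> {0<..<1}"
begin

text \<open>\<open>gain_x\<close> and \<open>gain_y\<close> are the payoff advantages of strategy 1 in population 1 and of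
  strategy 2 in population 2, i.e. the logistic gains of \<open>x\<close> and of \<open>1 - y\<close>.\<close>
definition gain_x :: "real \<Rightarrow> real" where
  "gain_x t = 0.5 * r t * y t - 0.5 * y t + 0.5"

definition gain_y :: "real \<Rightarrow> real" where
  "gain_y t = (x t * (1 - r t) + r t) / 2"

definition gain_r :: "real \<Rightarrow> real" where
  "gain_r t = (1 + \<theta>1) * x t + (1 + \<theta>2) * y t - 2"

lemma x_deriv: "0 \<le> t \<Longrightarrow> (x has_real_derivative x t * (1 - x t) * gain_x t) (at t within {0..})"
  using solution by (simp add: is_solution_def fx_def gain_x_def)

lemma y_deriv:
  assumes "0 \<le> t"
  shows "(y has_real_derivative - (y t * (1 - y t) * gain_y t)) (at t within {0..})"
proof -
  have "fy (x t) (y t) (r t) = - (y t * (1 - y t) * gain_y t)"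
    unfolding fy_def gain_y_def by (simp add: field_simps)
  then show ?thesis using solution assms unfolding is_solution_def by metis
qed

lemma one_minus_y_deriv:
  "0 \<le> t \<Longrightarrow>
    ((\<lambda>t. 1 - y t) has_real_derivative (1 - y t) * (1 - (1 - y t)) * gain_y t) (at t within {0..})"
  using y_deriv by (auto intro!: derivative_eq_intros simp: algebra_simps)

lemma r_deriv: "0 \<le> t \<Longrightarrow> (r has_real_derivative r t * (1 - r t) * gain_r t) (at t within {0..})"
  using solution by (simp add: is_solution_def fr_def gain_r_def)

lemma one_minus_r_deriv:
  "0 \<le> t \<Longrightarrow>
    ((\<lambda>t. 1 - r t) has_real_derivative (1 - r t) * (1 - (1 - r t)) * - gain_r t) (at t within {0..})"
  using r_deriv by (auto intro!: derivative_eq_intros simp: algebra_simps)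

lemma in_unit_cube:
  assumes "0 \<le> t"
  shows "x t \<in> {0<..<1}" and "y t \<in> {0<..<1}" and "r t \<in> {0<..<1}"
proof -
  let ?cube = "{0<..<1::real} \<times> {0<..<1::real} \<times> {0<..<1::real}"
  have "continuous_on {0..} x" using x_deriv by (rule continuous_on_if_deriv_within)
  moreover have "continuous_on {0..} y" using y_deriv by (rule continuous_on_if_deriv_within)
  moreover have "continuous_on {0..} r" using r_deriv by (rule continuous_on_if_deriv_within)
  ultimately have "continuous_on {0..} (\<lambda>t. (x t, y t, r t))" by (intro continuous_intros)
  moreover have "open ?cube" by (intro open_Times open_greaterThanLessThan)
  moreover have "(x T, y T, r T) \<in> ?cube"
    if "0 \<le> T" and before: "\<And>s. 0 \<le> s \<Longrightarrow> s < T \<Longrightarrow> (x s, y s, r s) \<in> ?cube" for T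
  proof -
    define K where "K = 4 + \<bar>\<theta>1\<bar> + \<bar>\<theta>2\<bar>"
    have "1 \<le> K" by (simp add: K_def)
    have bounded: "x s \<in> {0<..<1} \<and> y s \<in> {0<..<1} \<and> r s \<in> {0<..<1} \<and>
        \<bar>gain_x s\<bar> \<le> K \<and> \<bar>gain_y s\<bar> \<le> K \<and> \<bar>gain_r s\<bar> \<le> K" if "0 < s" "s < T" for s
      using before[of s] that replicator_gains_bounded(1,2)[of "x s" "y s" "r s"]
        replicator_gains_bounded(3)[of "x s" "y s" "r s" \<theta>1 \<theta>2] \<open>1 \<le> K\<close>
      by (auto simp: gain_x_def gain_y_def gain_r_def K_def)
    have "x T \<in> {0<..<1}"
      by (rule logistic_stays_in_unit_interval[OF x_deriv \<open>0 \<le> T\<close> initial(1)]) (use bounded in auto)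
    moreover have "1 - y T \<in> {0<..<1}"
      by (rule logistic_stays_in_unit_interval[OF one_minus_y_deriv \<open>0 \<le> T\<close>])
        (use bounded initial(2) in auto)
    moreover have "r T \<in> {0<..<1}"
      by (rule logistic_stays_in_unit_interval[OF r_deriv \<open>0 \<le> T\<close> initial(3)]) (use bounded in auto)
    ultimately show ?thesis by auto
  qed
  ultimately have "(x t, y t, r t) \<in> ?cube" by (rule stays_in_open_if_no_first_exit) (use assms in auto)
  then show "x t \<in> {0<..<1}" "y t \<in> {0<..<1}" "r t \<in> {0<..<1}" by auto
qed

lemma gain_x_ge: "0 \<le> t \<Longrightarrow> (1 - y t) / 2 \<le> gain_x t"
  using replicator_gains_lower_bounds(1)[of "x t" "y t" "r t"] in_unit_cube[of t]
  by (simp add: gain_x_def)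

lemma gain_y_ge: "0 \<le> t \<Longrightarrow> x t / 2 \<le> gain_y t"
  using replicator_gains_lower_bounds(2)[of "x t" "y t" "r t"] in_unit_cube[of t]
  by (simp add: gain_y_def)

lemma x_mono:
  assumes "0 \<le> s" "s \<le> t"
  shows "x s \<le> x t"
proof (rule le_if_deriv_within_nonneg[OF x_deriv assms])
  fix u assume "s < u" "u < t"
  with assms have "0 \<le> u" by simp
  then show "0 \<le> x u * (1 - x u) * gain_x u"
    using in_unit_cube[OF \<open>0 \<le> u\<close>] gain_x_ge[OF \<open>0 \<le> u\<close>] by (intro mult_nonneg_nonneg) auto
qed

lemma y_antimono:
  assumes "0 \<le> s" "s \<le> t"
  shows "y t \<le> y s"
proof -
  have "1 - y s \<le> 1 - y t"
  proof (rule le_if_deriv_within_nonneg[OF one_minus_y_deriv assms])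
    fix u assume "s < u" "u < t"
    with assms have "0 \<le> u" by simp
    then show "0 \<le> (1 - y u) * (1 - (1 - y u)) * gain_y u"
      using in_unit_cube[OF \<open>0 \<le> u\<close>] gain_y_ge[OF \<open>0 \<le> u\<close>] by (intro mult_nonneg_nonneg) auto
  qed
  then show ?thesis by simp
qed

lemma x_tendsto_one: "(x \<longlongrightarrow> 1) at_top"
proof -
  have "(1 - y 0) / 2 \<le> gain_x t" if "0 \<le> t" for t
    using gain_x_ge[OF that] y_antimono[OF order_refl that] by simp
  then have "\<forall>\<^sub>F t in at_top. (1 - y 0) / 2 \<le> gain_x t"
    unfolding eventually_at_top_linorder by blast
  from logistic_tendsto_one[OF x_deriv in_unit_cube(1) this] initial(2) show ?thesis by simp
qed

lemma y_tendsto_zero: "(y \<longlongrightarrow> 0) at_top"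
proof -
  have "x 0 / 2 \<le> gain_y t" if "0 \<le> t" for t
    using gain_y_ge[OF that] x_mono[OF order_refl that] by simp
  then have rate: "\<forall>\<^sub>F t in at_top. x 0 / 2 \<le> gain_y t"
    unfolding eventually_at_top_linorder by blast
  have "1 - y t \<in> {0<..<1}" if "0 \<le> t" for t using in_unit_cube(2)[OF that] by simp
  from logistic_tendsto_one[OF one_minus_y_deriv this rate] initial(1)
  have "((\<lambda>t. 1 - y t) \<longlongrightarrow> 1) at_top" by simp
  then have "((\<lambda>t. 1 - (1 - y t)) \<longlongrightarrow> 1 - 1) at_top" by (intro tendsto_diff tendsto_const)
  then show ?thesis by simp
qed

lemma gain_r_tendsto: "(gain_r \<longlongrightarrow> \<theta>1 - 1) at_top"
proof -
  have "((\<lambda>t. (1 + \<theta>1) * x t + (1 + \<theta>2) * y t - 2) \<longlongrightarrow> (1 + \<theta>1) * 1 + (1 + \<theta>2) * 0 - 2) at_top"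
    by (intro tendsto_intros x_tendsto_one y_tendsto_zero)
  then show ?thesis by (simp add: gain_r_def[abs_def])
qed

lemma r_tendsto_one:
  assumes "1 < \<theta>1"
  shows "(r \<longlongrightarrow> 1) at_top"
proof -
  have "\<forall>\<^sub>F t in at_top. (\<theta>1 - 1) / 2 < gain_r t"
    using gain_r_tendsto by (rule order_tendstoD(1)) (use assms in simp)
  then have "\<forall>\<^sub>F t in at_top. (\<theta>1 - 1) / 2 \<le> gain_r t" by (rule eventually_mono) simp
  from logistic_tendsto_one[OF r_deriv in_unit_cube(3) this] assms show ?thesis by simp
qed

lemma r_tendsto_zero:
  assumes "\<theta>1 < 1"
  shows "(r \<longlongrightarrow> 0) at_top"
proof -
  have "((\<lambda>t. - gain_r t) \<longlongrightarrow> - (\<theta>1 - 1)) at_top" by (intro tendsto_minus gain_r_tendsto)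
  then have "\<forall>\<^sub>F t in at_top. (1 - \<theta>1) / 2 < - gain_r t"
    by (rule order_tendstoD(1)) (use assms in simp)
  then have rate: "\<forall>\<^sub>F t in at_top. (1 - \<theta>1) / 2 \<le> - gain_r t" by (rule eventually_mono) simp
  have "1 - r t \<in> {0<..<1}" if "0 \<le> t" for t using in_unit_cube(3)[OF that] by simp
  from logistic_tendsto_one[OF one_minus_r_deriv this rate] assms
  have "((\<lambda>t. 1 - r t) \<longlongrightarrow> 1) at_top" by simp
  then have "((\<lambda>t. 1 - (1 - r t)) \<longlongrightarrow> 1 - 1) at_top" by (intro tendsto_diff tendsto_const)
  then show ?thesis by simp
qed

text \<open>For \<open>\<theta>1 = 1\<close> the logit of \<open>r\<close> has derivative \<open>(1 + \<theta>2) y - 2 (1 - x)\<close>. Near the corner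
  \<open>x = 1, y = 0\<close> the equations give \<open>(1 - x)' \<le> -(1 - x)/8\<close> and \<open>y' \<le> -y/8\<close>, so adding the
  corrections \<open>8 (1 + \<theta>2) y\<close> and \<open>-16 (1 - x)\<close> to the logit yields a decreasing upper and an
  increasing lower envelope.\<close>
definition logit_r :: "real \<Rightarrow> real" where
  "logit_r t = ln (r t) - ln (1 - r t)"

lemma logit_r_deriv: "0 \<le> t \<Longrightarrow> (logit_r has_real_derivative gain_r t) (at t within {0..})"
  unfolding logit_r_def[abs_def] by (rule logit_has_real_derivative[OF r_deriv in_unit_cube(3)])

lemma eventually_near_corner: "\<exists>t1\<ge>0. \<forall>t\<ge>t1. 1/2 \<le> x t \<and> 1/2 \<le> 1 - y t"
proof -
  have "\<forall>\<^sub>F t in at_top. 1/2 < x t" by (rule order_tendstoD(1)[OF x_tendsto_one]) simp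
  moreover have "\<forall>\<^sub>F t in at_top. y t < 1/2" by (rule order_tendstoD(2)[OF y_tendsto_zero]) simp
  moreover have "\<forall>\<^sub>F t in at_top. 0 \<le> (t::real)" by (rule eventually_ge_at_top)
  ultimately have "\<forall>\<^sub>F t in at_top. 0 \<le> t \<and> 1/2 \<le> x t \<and> 1/2 \<le> 1 - y t"
    by eventually_elim auto
  then obtain t1 where "\<forall>t\<ge>t1. 0 \<le> t \<and> 1/2 \<le> x t \<and> 1/2 \<le> 1 - y t"
    unfolding eventually_at_top_linorder by blast
  then show ?thesis by (intro exI[of _ t1]) auto
qed

lemma x_rate_near_corner:
  assumes "0 \<le> t" "1/2 \<le> x t" "1/2 \<le> 1 - y t"
  shows "1 - x t \<le> 8 * (x t * (1 - x t) * gain_x t)"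
  using assms gain_x_ge[OF assms(1)] in_unit_cube[OF assms(1)]
  by (intro logistic_rate_lower_bound) auto

lemma y_rate_near_corner:
  assumes "0 \<le> t" "1/2 \<le> x t" "1/2 \<le> 1 - y t"
  shows "y t \<le> 8 * (y t * (1 - y t) * gain_y t)"
proof -
  have "1 - (1 - y t) \<le> 8 * ((1 - y t) * (1 - (1 - y t)) * gain_y t)"
    using assms gain_y_ge[OF assms(1)] in_unit_cube[OF assms(1)]
    by (intro logistic_rate_lower_bound) auto
  then show ?thesis by (simp add: algebra_simps)
qed

lemma logit_r_lower_envelope_mono:
  assumes "\<theta>1 = 1" "-1 \<le> \<theta>2" and corner: "\<And>u. t1 \<le> u \<Longrightarrow> 1/2 \<le> x u \<and> 1/2 \<le> 1 - y u"
    and "0 \<le> t1" "t1 \<le> s" "s \<le> t"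
  shows "logit_r s - 16 * (1 - x s) \<le> logit_r t - 16 * (1 - x t)"
proof (rule le_if_deriv_within_nonneg[where g = "\<lambda>t. logit_r t - 16 * (1 - x t)"])
  fix u :: real assume "0 \<le> u"
  then show "((\<lambda>t. logit_r t - 16 * (1 - x t)) has_real_derivative
      gain_r u + 16 * (x u * (1 - x u) * gain_x u)) (at u within {0..})"
    using logit_r_deriv x_deriv by (auto intro!: derivative_eq_intros)
next
  fix u assume "s < u" "u < t"
  with assms have "0 \<le> u" "t1 \<le> u" by auto
  then have "1 - x u \<le> 8 * (x u * (1 - x u) * gain_x u)"
    using x_rate_near_corner corner by blast
  moreover have "0 \<le> (1 + \<theta>2) * y u" using \<open>-1 \<le> \<theta>2\<close> in_unit_cube(2)[OF \<open>0 \<le> u\<close>] by simp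
  moreover have "gain_r u = (1 + \<theta>2) * y u - 2 * (1 - x u)"
    unfolding gain_r_def using \<open>\<theta>1 = 1\<close> by (simp add: algebra_simps)
  ultimately show "0 \<le> gain_r u + 16 * (x u * (1 - x u) * gain_x u)" by argo
qed (use assms in auto)

lemma logit_r_upper_envelope_antimono:
  assumes "\<theta>1 = 1" "-1 \<le> \<theta>2" and corner: "\<And>u. t1 \<le> u \<Longrightarrow> 1/2 \<le> x u \<and> 1/2 \<le> 1 - y u"
    and "0 \<le> t1" "t1 \<le> s" "s \<le> t"
  shows "logit_r t + 8 * (1 + \<theta>2) * y t \<le> logit_r s + 8 * (1 + \<theta>2) * y s"
proof -
  have "- (logit_r s + 8 * (1 + \<theta>2) * y s) \<le> - (logit_r t + 8 * (1 + \<theta>2) * y t)"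
  proof (rule le_if_deriv_within_nonneg[where g = "\<lambda>t. - (logit_r t + 8 * (1 + \<theta>2) * y t)"])
    fix u :: real assume "0 \<le> u"
    then show "((\<lambda>t. - (logit_r t + 8 * (1 + \<theta>2) * y t)) has_real_derivative
        - (gain_r u - (1 + \<theta>2) * (8 * (y u * (1 - y u) * gain_y u)))) (at u within {0..})"
      using logit_r_deriv y_deriv by (auto intro!: derivative_eq_intros)
  next
    fix u assume "s < u" "u < t"
    with assms have "0 \<le> u" "t1 \<le> u" by auto
    then have "(1 + \<theta>2) * y u \<le> (1 + \<theta>2) * (8 * (y u * (1 - y u) * gain_y u))"
      using y_rate_near_corner corner \<open>-1 \<le> \<theta>2\<close> by (intro mult_left_mono) auto
    moreover have "0 \<le> 1 - x u" using in_unit_cube(1)[OF \<open>0 \<le> u\<close>] by simp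
    moreover have "gain_r u = (1 + \<theta>2) * y u - 2 * (1 - x u)"
      unfolding gain_r_def using \<open>\<theta>1 = 1\<close> by (simp add: algebra_simps)
    ultimately show "0 \<le> - (gain_r u - (1 + \<theta>2) * (8 * (y u * (1 - y u) * gain_y u)))"
      by argo
  qed (use assms in auto)
  then show ?thesis by simp
qed

lemma r_convergent:
  assumes "\<theta>1 = 1" "-1 \<le> \<theta>2"
  shows "\<exists>L\<in>{0..1}. (r \<longlongrightarrow> L) at_top"
proof -
  obtain t1 where "0 \<le> t1" and corner: "\<And>u. t1 \<le> u \<Longrightarrow> 1/2 \<le> x u \<and> 1/2 \<le> 1 - y u"
    using eventually_near_corner by blast
  have "\<exists>L. (logit_r \<longlongrightarrow> L) at_top"
  proof (rule convergent_if_monotone_corrections[where T = t1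
        and a = "\<lambda>t. 8 * (1 + \<theta>2) * y t" and b = "\<lambda>t. 16 * (1 - x t)"])
    show "logit_r s - 16 * (1 - x s) \<le> logit_r t - 16 * (1 - x t)" if "t1 \<le> s" "s \<le> t" for s t
      by (rule logit_r_lower_envelope_mono[OF assms corner \<open>0 \<le> t1\<close> that])
    show "logit_r t + 8 * (1 + \<theta>2) * y t \<le> logit_r s + 8 * (1 + \<theta>2) * y s"
      if "t1 \<le> s" "s \<le> t" for s t
      by (rule logit_r_upper_envelope_antimono[OF assms corner \<open>0 \<le> t1\<close> that])
    show "0 \<le> 8 * (1 + \<theta>2) * y t + 16 * (1 - x t)" if "t1 \<le> t" for t
      using in_unit_cube[of t] that \<open>0 \<le> t1\<close> \<open>-1 \<le> \<theta>2\<close> by simp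
    have "((\<lambda>t. 16 * (1 - x t)) \<longlongrightarrow> 16 * (1 - 1)) at_top"
      by (intro tendsto_intros x_tendsto_one)
    then show "((\<lambda>t. 16 * (1 - x t)) \<longlongrightarrow> 0) at_top" by simp
  qed
  then obtain L where "(logit_r \<longlongrightarrow> L) at_top" ..
  moreover have "\<forall>\<^sub>F t in at_top. r t \<in> {0<..<1}"
    unfolding eventually_at_top_linorder using in_unit_cube(3) by blast
  ultimately have "(r \<longlongrightarrow> exp L / (1 + exp L)) at_top"
    by (intro tendsto_logistic_if_logit_tendsto) (simp_all add: logit_r_def[abs_def])
  moreover have "exp L / (1 + exp L) \<in> {0..1}"
    by (simp add: add_pos_pos less_imp_le)
  ultimately show ?thesis by blast
qed

end

theorem mainTheorem4:
  fixes \<theta>1 \<theta>2 :: real and x y r :: "real \<Rightarrow> real"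
  assumes "\<theta>1 > 0" and "\<theta>2 > 0"
    and "is_solution \<theta>1 \<theta>2 x y r"
    and "x 0 \<in> {0<..<1}" and "y 0 \<in> {0<..<1}" and "r 0 \<in> {0<..<1}"
  shows "(x \<longlongrightarrow> 1) at_top \<and> (y \<longlongrightarrow> 0) at_top \<and>
         (\<theta>1 > 1 \<longrightarrow> (r \<longlongrightarrow> 1) at_top) \<and>
         (\<theta>1 < 1 \<longrightarrow> (r \<longlongrightarrow> 0) at_top) \<and>
         (\<theta>1 = 1 \<longrightarrow> (\<exists>r_lim\<in>{0..1}. (r \<longlongrightarrow> r_lim) at_top))"
proof -
  interpret replicator_solution \<theta>1 \<theta>2 x y r
    using assms(3-6) by unfold_locales
  show ?thesis
    using x_tendsto_one y_tendsto_zero r_tendsto_one r_tendsto_zero r_convergent \<open>\<theta>2 > 0\<close>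
    by auto
qed

end
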